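(* Let $a_1,\ldots,a_\ell\colon\mathbb{N}\to\mathbb{Z}$ be sequences, $(X,\mathcal{X},\mu,T_1,\ldots,T_\ell)$ a system, $\delta>0$, and $f_1,\ldots,f_\ell\in L^\infty(\mu)$ 1-bounded functions with $$\limsup_{N\to\infty}\Big\|\frac1N\sum_{n=1}^N T_1^{a_1(n)}f_1\cdots T_\ell^{a_\ell(n)}f_\ell\Big\|_{L^2(\mu)}\ge\delta.$$ Let $m\in[\ell]$ and suppose $f_m$ is $\mathcal{A}$-measurable for some sub-$\sigma$-algebra $\mathcal{A}\subseteq\mathcal{X}$. Then there exist $N_k\to\infty$ and $g_k\in L^\infty(\mu)$ with $\|g_k\|_{L^\infty(\mu)}\le1$, $k\in\mathbb{N}$, such that the weak limit $$\tilde f_m:=\lim_{k\to\infty}\frac{1}{N_k}\sum_{n=1}^{N_k}T_m^{-a_m(n)}g_k\cdot\prod_{j\in[\ell],\,j\neq m}T_m^{-a_m(n)}T_j^{a_j(n)}\overline{f_j}$$ exists in $L^2(\mu)$ and $$\limsup_{k\to\infty}\Big\|\frac{1}{N_k}\sum_{n=1}^{N_k}T_m^{a_m(n)}\mathbb{E}(\tilde f_m|\mathcal{A})\cdot\prod_{j\in[\ell],\,j\neq m}T_j^{a_j(n)}f_j\Big\|_{L^2(\mu)}\ge\delta^4.$$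
   Context: A system: Lebesgue probability space with invertible pairwise commuting measure-preserving $T_1,\ldots,T_\ell$. A function is 1-bounded if its absolute value is at most 1 a.e. $[\ell]=\{1,\ldots,\ell\}$. *)

theory Defs
  imports "HOL-Probability.Probability"
begin

definition tpow :: "('a \<Rightarrow> 'a) \<Rightarrow> int \<Rightarrow> 'a \<Rightarrow> 'a" where
  "tpow S k = (if 0 \<le> k then S ^^ nat k else (inv S) ^^ nat (- k))"

definition mpt :: "'a measure \<Rightarrow> ('a \<Rightarrow> 'a) \<Rightarrow> bool" where
  "mpt M S \<longleftrightarrow> S \<in> measurable M M \<and> distr M M S = M"

definition mps_system :: "'a measure \<Rightarrow> nat \<Rightarrow> (nat \<Rightarrow> 'a \<Rightarrow> 'a) \<Rightarrow> bool" where
  "mps_system M l T \<longleftrightarrow> prob_space M \<and>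
     (\<forall>i\<in>{1..l}. bij (T i) \<and> mpt M (T i) \<and> mpt M (inv (T i))) \<and>
     (\<forall>i\<in>{1..l}. \<forall>j\<in>{1..l}. T i \<circ> T j = T j \<circ> T i)"

definition one_bounded :: "'a measure \<Rightarrow> ('a \<Rightarrow> complex) \<Rightarrow> bool" where
  "one_bounded M f \<longleftrightarrow> f \<in> borel_measurable M \<and> (AE x in M. cmod (f x) \<le> 1)"

definition L2norm :: "'a measure \<Rightarrow> ('a \<Rightarrow> complex) \<Rightarrow> real" where
  "L2norm M f = sqrt (LINT x|M. (cmod (f x))\<^sup>2)"

definition in_L2 :: "'a measure \<Rightarrow> ('a \<Rightarrow> complex) \<Rightarrow> bool" where
  "in_L2 M f \<longleftrightarrow> f \<in> borel_measurable M \<and> integrable M (\<lambda>x. (cmod (f x))\<^sup>2)"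

definition weak_L2_limit :: "'a measure \<Rightarrow> (nat \<Rightarrow> 'a \<Rightarrow> complex) \<Rightarrow> ('a \<Rightarrow> complex) \<Rightarrow> bool" where
  "weak_L2_limit M F g \<longleftrightarrow> in_L2 M g \<and>
     (\<forall>h. in_L2 M h \<longrightarrow>
        (\<lambda>k. LINT x|M. F k x * cnj (h x)) \<longlonglongrightarrow> (LINT x|M. g x * cnj (h x)))"

definition cond_exp_c :: "'a measure \<Rightarrow> 'a measure \<Rightarrow> ('a \<Rightarrow> complex) \<Rightarrow> 'a \<Rightarrow> complex" where
  "cond_exp_c M A f = (\<lambda>x. complex_of_real (real_cond_exp M A (\<lambda>y. Re (f y)) x)
                          + \<i> * complex_of_real (real_cond_exp M A (\<lambda>y. Im (f y)) x))"

definition avg :: "nat \<Rightarrow> (nat \<Rightarrow> 'a \<Rightarrow> complex) \<Rightarrow> 'a \<Rightarrow> complex" where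
  "avg N F = (\<lambda>x. (\<Sum>n=1..N. F n x) / of_nat N)"

end

theory Submission
  imports Defs "HOL-Library.Diagonal_Subsequence"
begin

(* Along a subsequence N_k the L2 norms of the averages g_k of f_1 ... f_l converge
   to their limsup L >= delta.  The dual averages D_k (the averages defining the weak limit in the
   statement) are bounded by 1, so a further subsequence converges weakly to some ft; this is weak
   sequential compactness of the unit ball of L-infinity, obtained by restricting to the
   countably generated sigma-algebra of the D_k, a diagonal argument on a countable generator and
   Radon-Nikodym.  Substituting x = T_m^(a_m n) y term by term gives <D_k, phi> = cnj <A_k phi, g_k>,
   where A_k phi is the average with f_m replaced by phi.  For phi = f_m this is |g_k|^2, hence
   Re <ft, f_m> = L^2 >= delta^2.  Since f_m is A-measurable, h = E(ft|A) has
   delta^2 <= Re <h, f_m> <= |h|_2, and Re <D_k, h> <= |A_k h|_2 while <D_k, h> tends to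
   <ft, h> = |h|_2^2 >= delta^4. *)

section \<open>Subsequences\<close>

lemma bounded_double_seq_diagonal_subseq:
  fixes x :: "nat \<Rightarrow> nat \<Rightarrow> real"
  assumes bdd: "\<And>i k. \<bar>x i k\<bar> \<le> C"
  obtains d where "strict_mono d" "\<And>i. convergent (\<lambda>k. x i (d k))"
proof -
  interpret subseqs "\<lambda>i s. convergent (\<lambda>k. x i (s k))"
  proof
    fix i and s :: "nat \<Rightarrow> nat"
    assume "strict_mono s"
    have "\<And>k. x i (s k) \<in> {-C..C}"
      using bdd by (simp add: abs_le_iff minus_le_iff)
    then obtain l s' where "strict_mono s'" "((\<lambda>k. x i (s k)) \<circ> s') \<longlonglongrightarrow> l"
      using seq_compactE[OF compact_imp_seq_compact[OF compact_Icc], of "\<lambda>k. x i (s k)" "-C" C]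
      by blast
    then show "\<exists>s'. strict_mono s' \<and> convergent (\<lambda>k. x i ((s \<circ> s') k))"
      by (auto simp: comp_def convergent_def)
  qed
  have "convergent (\<lambda>k. x i (diagseq k))" for i
  proof -
    have eq: "(\<lambda>k. x i ((seqseq (Suc i) \<circ> (\<lambda>k. fold_reduce (Suc i) k (Suc i + k))) k))
        = (\<lambda>k. x i (seqseq (Suc i) k)) \<circ> (\<lambda>k. fold_reduce (Suc i) k (Suc i + k))"
      by auto
    have "convergent (\<lambda>k. x i ((diagseq \<circ> (+) (Suc i)) k))"
      unfolding diagseq_seqseq eq
      by (intro convergent_subseq_convergent seqseq_holds subseq_diagonal_rest)
    then show ?thesis
      unfolding comp_def add.commute[of "Suc i"] by (rule convergent_ignore_initial_segment[THEN iffD1])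
  qed
  then show thesis
    using that subseq_diagseq by blast
qed

lemma convergent_uniform_approx:
  fixes x :: "nat \<Rightarrow> real"
  assumes "\<And>e. e > 0 \<Longrightarrow> \<exists>y. convergent y \<and> (\<forall>k. \<bar>x k - y k\<bar> \<le> e)"
  shows "convergent x"
proof -
  have "Cauchy x"
  proof (rule metric_CauchyI)
    fix r :: real
    assume "r > 0"
    then obtain y where y: "convergent y" "\<forall>k. \<bar>x k - y k\<bar> \<le> r/4"
      using assms[of "r/4"] by auto
    then obtain n0 where n0: "\<forall>m\<ge>n0. \<forall>n\<ge>n0. dist (y m) (y n) < r/4"
      using \<open>r > 0\<close> metric_CauchyD[OF convergent_Cauchy[OF y(1)], of "r/4"] by auto
    have "dist (x m) (x n) < r" if "m \<ge> n0" "n \<ge> n0" for m n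
    proof -
      have "\<bar>y m - y n\<bar> < r/4"
        using n0 that by (auto simp: dist_real_def)
      then show ?thesis
        using y(2)[rule_format, of m] y(2)[rule_format, of n] unfolding dist_real_def by linarith
    qed
    then show "\<exists>n0. \<forall>m\<ge>n0. \<forall>n\<ge>n0. dist (x m) (x n) < r"
      by blast
  qed
  then show ?thesis
    using Cauchy_convergent_iff by blast
qed

lemma tendsto_uniform_approx:
  fixes x :: "nat \<Rightarrow> real"
  assumes "\<And>e. e > 0 \<Longrightarrow> \<exists>y L'. y \<longlonglongrightarrow> L' \<and> \<bar>L - L'\<bar> \<le> e \<and> (\<forall>k. \<bar>x k - y k\<bar> \<le> e)"
  shows "x \<longlonglongrightarrow> L"
proof (rule LIMSEQ_I)
  fix r :: real
  assume "r > 0"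
  then obtain y L' where y: "y \<longlonglongrightarrow> L'" "\<bar>L - L'\<bar> \<le> r/4" "\<forall>k. \<bar>x k - y k\<bar> \<le> r/4"
    using assms[of "r/4"] by auto
  then obtain n0 where n0: "\<forall>n\<ge>n0. norm (y n - L') < r/4"
    using \<open>r > 0\<close> LIMSEQ_D[of y L' "r/4"] by auto
  have "norm (x n - L) < r" if "n \<ge> n0" for n
  proof -
    have "\<bar>y n - L'\<bar> < r/4"
      using n0 that by auto
    then show ?thesis
      using y(2) y(3)[rule_format, of n] unfolding real_norm_def by linarith
  qed
  then show "\<exists>n0. \<forall>n\<ge>n0. norm (x n - L) < r"
    by blast
qed

lemma limsup_attained_subseq:
  fixes x :: "nat \<Rightarrow> real"
  assumes "\<And>n. \<bar>x n\<bar> \<le> B"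
  obtains s L where "strict_mono s" "(\<lambda>k. x (s k)) \<longlonglongrightarrow> L" "limsup (\<lambda>n. ereal (x n)) = ereal L"
proof -
  define \<Lambda> where "\<Lambda> = limsup (\<lambda>n. ereal (x n))"
  obtain s where s: "strict_mono s" "(\<lambda>k. ereal (x (s k))) \<longlonglongrightarrow> \<Lambda>"
    using limsup_subseq_lim[of "\<lambda>n. ereal (x n)"] unfolding \<Lambda>_def comp_def by blast
  have "ereal (- B) \<le> ereal (x n)" "ereal (x n) \<le> ereal B" for n
    using assms[of n] by auto
  then have "ereal (- B) \<le> \<Lambda>" "\<Lambda> \<le> ereal B"
    by (auto intro!: LIMSEQ_le_const[OF s(2)] LIMSEQ_le_const2[OF s(2)])
  then obtain L where "\<Lambda> = ereal L"
    by (cases \<Lambda>) auto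
  then show thesis
    using that[OF s(1)] s(2) by (simp add: \<Lambda>_def)
qed

section \<open>Weak sequential compactness of the unit ball of L-infinity\<close>

lemma abs_integral_indicator_mult_le_measure:
  fixes v :: "'a \<Rightarrow> real"
  assumes "finite_measure M" "B \<in> sets M" "v \<in> borel_measurable M" "AE x in M. \<bar>v x\<bar> \<le> 1"
  shows "\<bar>\<integral>x. indicator B x * v x \<partial>M\<bar> \<le> measure M B"
proof -
  interpret finite_measure M by fact
  have "\<bar>\<integral>x. indicator B x * v x \<partial>M\<bar> \<le> (\<integral>x. \<bar>indicator B x * v x\<bar> \<partial>M)"
    by (rule integral_abs_bound)
  also have "\<dots> \<le> (\<integral>x. indicator B x \<partial>M)"
  proof (intro integral_mono_AE)
    show "integrable M (\<lambda>x. \<bar>indicator B x * v x\<bar>)"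
      using assms by (intro integrable_const_bound[where B=1]) (auto simp: abs_mult indicator_def)
    show "integrable M (indicator B :: 'a \<Rightarrow> real)"
      using assms(2) by (intro integrable_const_bound[where B=1]) auto
    show "AE x in M. \<bar>indicator B x * v x\<bar> \<le> indicator B x"
      using assms(4) by eventually_elim (auto simp: abs_mult indicator_def)
  qed
  also have "\<dots> = measure M B"
    using assms(2) by simp
  finally show ?thesis .
qed

lemma integral_indicator_mult_Un:
  fixes v :: "'a \<Rightarrow> real"
  assumes "integrable M v" "A \<in> sets M" "B \<in> sets M" "A \<inter> B = {}"
  shows "(\<integral>x. indicator (A \<union> B) x * v x \<partial>M) =
    (\<integral>x. indicator A x * v x \<partial>M) + (\<integral>x. indicator B x * v x \<partial>M)"
  using integrable_mult_indicator[OF assms(2,1)] integrable_mult_indicator[OF assms(3,1)]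
  by (simp add: indicator_disj_union[OF assms(4)] distrib_right)

lemma convergent_integral_indicator_mult_UN:
  fixes v :: "nat \<Rightarrow> 'a \<Rightarrow> real" and A :: "nat \<Rightarrow> 'a set"
  assumes "finite_measure M" and v: "\<And>k. v k \<in> borel_measurable M" "\<And>k. AE x in M. \<bar>v k x\<bar> \<le> 1"
    and A: "range A \<subseteq> sets M" "disjoint_family A"
    and conv: "\<And>i. convergent (\<lambda>k. \<integral>x. indicator (A i) x * v k x \<partial>M)"
  shows "convergent (\<lambda>k. \<integral>x. indicator (\<Union>i. A i) x * v k x \<partial>M)"
proof -
  interpret finite_measure M by fact
  define I where "I B k = (\<integral>x. indicator B x * v k x \<partial>M)" for B k
  define U where "U = (\<Union>i. A i)"
  define V where "V n = (\<Union>i<n. A i)" for n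
  have v_int: "integrable M (v k)" for k
    using v by (intro integrable_const_bound[where B=1]) auto
  have sets: "U \<in> sets M" "V n \<in> sets M" for n
    using A(1) unfolding U_def V_def by auto
  have "convergent (\<lambda>k. I (V n) k)" for n
  proof (induction n)
    case 0
    then show ?case by (simp add: I_def V_def convergent_const)
  next
    case (Suc n)
    have "V (Suc n) = V n \<union> A n" "V n \<inter> A n = {}"
      using A(2) unfolding V_def disjoint_family_on_def by (auto simp: lessThan_Suc dest: less_imp_neq)
    then have "I (V (Suc n)) k = I (V n) k + I (A n) k" for k
      unfolding I_def using integral_indicator_mult_Un[OF v_int sets(2)] A(1) by auto
    then show ?case
      using Suc conv[of n] by (simp add: I_def convergent_add)
  qed
  moreover have "\<bar>I U k - I (V n) k\<bar> \<le> measure M (U - V n)" for k n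
  proof -
    have "U = (U - V n) \<union> V n"
      unfolding U_def V_def by auto
    then have "I U k = I (U - V n) k + I (V n) k"
      unfolding I_def using integral_indicator_mult_Un[OF v_int, of "U - V n" "V n"] sets by auto
    then show ?thesis
      using abs_integral_indicator_mult_le_measure[OF assms(1) _ v, of "U - V n"] sets
      by (simp add: I_def)
  qed
  moreover have "(\<lambda>n. measure M (U - V n)) \<longlonglongrightarrow> 0"
  proof -
    have "(\<lambda>n. measure M (U - V n)) \<longlonglongrightarrow> measure M (\<Inter>n. U - V n)"
      using sets by (intro finite_Lim_measure_decseq) (auto simp: decseq_def V_def)
    moreover have "(\<Inter>n. U - V n) = {}"
      unfolding U_def V_def by (auto simp: lessThan_Suc)
    ultimately show ?thesis
      by (metis measure_empty)
  qed
  ultimately have "convergent (\<lambda>k. I U k)"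
  proof (intro convergent_uniform_approx)
    fix e :: real
    assume "e > 0"
    assume V_conv: "\<And>n. convergent (I (V n))"
      and tail: "\<And>k n. \<bar>I U k - I (V n) k\<bar> \<le> measure M (U - V n)"
      and tail_lim: "(\<lambda>n. measure M (U - V n)) \<longlonglongrightarrow> 0"
    obtain n where "norm (measure M (U - V n) - 0) < e"
      using LIMSEQ_D[OF tail_lim \<open>e > 0\<close>] by blast
    then have "measure M (U - V n) < e"
      by simp
    then have "\<bar>I U k - I (V n) k\<bar> \<le> e" for k
      using tail[of k n] by linarith
    then show "\<exists>y. convergent y \<and> (\<forall>k. \<bar>I U k - y k\<bar> \<le> e)"
      using V_conv[of n] by blast
  qed
  then show ?thesis
    by (simp add: I_def U_def)
qed

lemma convergent_integral_indicator_mult_sigma_sets: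
  fixes v :: "nat \<Rightarrow> 'a \<Rightarrow> real"
  assumes M: "finite_measure M" and v: "\<And>k. v k \<in> borel_measurable M" "\<And>k. AE x in M. \<bar>v k x\<bar> \<le> 1"
    and P: "Int_stable P" "P \<subseteq> sets M" "space M \<in> P"
    and conv: "\<And>B. B \<in> P \<Longrightarrow> convergent (\<lambda>k. \<integral>x. indicator B x * v k x \<partial>M)"
    and B: "B \<in> sigma_sets (space M) P"
  shows "convergent (\<lambda>k. \<integral>x. indicator B x * v k x \<partial>M)"
proof -
  interpret finite_measure M by fact
  have v_int: "integrable M (v k)" for k
    using v by (intro integrable_const_bound[where B=1]) auto
  have sigma_sets_sub: "sigma_sets (space M) P \<subseteq> sets M"
    using P(2) by (rule sets.sigma_sets_subset)
  have "P \<subseteq> Pow (space M)"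
    using P(2) sets.sets_into_space by auto
  from P(1) this B show ?thesis
  proof (induct rule: sigma_sets_induct_disjoint)
    case (basic A)
    then show ?case by (rule conv)
  next
    case empty
    then show ?case by (simp add: convergent_const)
  next
    case (compl A)
    have A: "A \<in> sets M"
      using compl(1) sigma_sets_sub by auto
    have "(space M - A) \<union> A = space M" "(space M - A) \<inter> A = {}"
      using sets.sets_into_space[OF A] by auto
    then have "(\<integral>x. indicator (space M - A) x * v k x \<partial>M) =
        (\<integral>x. indicator (space M) x * v k x \<partial>M) - (\<integral>x. indicator A x * v k x \<partial>M)" for k
      using integral_indicator_mult_Un[OF v_int sets.compl_sets[OF A] A] by simp
    then show ?case
      using compl(2) conv[OF P(3)] by (simp add: convergent_diff)
  next
    case (union A)
    then show ?case
      using sigma_sets_sub by (intro convergent_integral_indicator_mult_UN[OF M v]) auto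
  qed
qed

lemma dominated_additive_countably_additive:
  fixes \<nu> :: "'a set \<Rightarrow> real"
  assumes "finite_measure N"
    and add: "\<And>A B. A \<in> sets N \<Longrightarrow> B \<in> sets N \<Longrightarrow> A \<inter> B = {} \<Longrightarrow> \<nu> (A \<union> B) = \<nu> A + \<nu> B"
    and dom: "\<And>B. B \<in> sets N \<Longrightarrow> \<bar>\<nu> B\<bar> \<le> measure N B"
  shows "positive (sets N) (\<lambda>B. ennreal (\<nu> B + measure N B))"
    and "countably_additive (sets N) (\<lambda>B. ennreal (\<nu> B + measure N B))"
proof -
  interpret finite_measure N by fact
  have nonneg: "0 \<le> \<nu> B + measure N B" if "B \<in> sets N" for B
    using dom[OF that] by linarith
  show pos: "positive (sets N) (\<lambda>B. ennreal (\<nu> B + measure N B))"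
    using dom[of "{}"] by (simp add: positive_def)
  show "countably_additive (sets N) (\<lambda>B. ennreal (\<nu> B + measure N B))"
  proof (rule sets.empty_continuous_imp_countably_additive[OF pos])
    show "additive (sets N) (\<lambda>B. ennreal (\<nu> B + measure N B))"
      unfolding additive_def
      by (simp add: add finite_measure_Union nonneg ennreal_plus[symmetric] algebra_simps
          del: ennreal_plus)
    show "\<forall>A\<in>sets N. ennreal (\<nu> A + measure N A) \<noteq> \<infinity>"
      by simp
    fix A :: "nat \<Rightarrow> 'a set"
    assume A: "range A \<subseteq> sets N" "decseq A" "(\<Inter>i. A i) = {}"
    then have "(\<lambda>i. measure N (A i)) \<longlonglongrightarrow> 0"
      using finite_Lim_measure_decseq[OF A(1,2)] by simp
    then have "(\<lambda>i. 2 * measure N (A i)) \<longlonglongrightarrow> 0"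
      using tendsto_mult_right_zero[of _ sequentially 2] by simp
    then have "(\<lambda>i. \<nu> (A i) + measure N (A i)) \<longlonglongrightarrow> 0"
    proof (rule tendsto_sandwich[OF _ _ tendsto_const, rotated 2])
      show "\<forall>\<^sub>F i in sequentially. 0 \<le> \<nu> (A i) + measure N (A i)"
        "\<forall>\<^sub>F i in sequentially. \<nu> (A i) + measure N (A i) \<le> 2 * measure N (A i)"
        using A(1) dom by (auto simp: abs_le_iff intro!: always_eventually nonneg)
    qed
    then have "(\<lambda>i. ennreal (\<nu> (A i) + measure N (A i))) \<longlonglongrightarrow> ennreal 0"
      by (rule tendsto_ennrealI)
    then show "(\<lambda>i. ennreal (\<nu> (A i) + measure N (A i))) \<longlonglongrightarrow> 0"
      by (simp only: ennreal_0)
  qed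
qed

lemma dominated_additive_nonneg_density:
  fixes \<nu> :: "'a set \<Rightarrow> real"
  assumes "finite_measure N"
    and add: "\<And>A B. A \<in> sets N \<Longrightarrow> B \<in> sets N \<Longrightarrow> A \<inter> B = {} \<Longrightarrow> \<nu> (A \<union> B) = \<nu> A + \<nu> B"
    and dom: "\<And>B. B \<in> sets N \<Longrightarrow> \<bar>\<nu> B\<bar> \<le> measure N B"
  obtains u where "u \<in> borel_measurable N" "\<And>x. 0 \<le> u x" "integrable N u"
    "\<And>B. B \<in> sets N \<Longrightarrow> (\<integral>x. indicator B x * u x \<partial>N) = \<nu> B + measure N B"
proof -
  interpret finite_measure N by fact
  define \<mu> where "\<mu> B = ennreal (\<nu> B + measure N B)" for B
  define K where "K = measure_of (space N) (sets N) \<mu>"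
  note \<mu>_measure = dominated_additive_countably_additive[OF assms, folded \<mu>_def]
  have K: "emeasure K B = \<mu> B" if "B \<in> sets N" for B
    unfolding K_def by (rule emeasure_measure_of_sigma[OF sets.sigma_algebra_axioms \<mu>_measure that])
  have sets_K: "sets K = sets N"
    by (simp add: K_def)
  have "absolutely_continuous N K"
    unfolding absolutely_continuous_def
  proof
    fix B
    assume "B \<in> null_sets N"
    then have "B \<in> sets N" "measure N B = 0"
      by (auto simp: measure_def null_setsD1)
    then show "B \<in> null_sets K"
      using dom[of B] K[of B] sets_K by (auto simp: \<mu>_def)
  qed
  then obtain f where f: "f \<in> borel_measurable N" "density N f = K"
    using Radon_Nikodym sets_K by blast
  have f_set: "(\<integral>\<^sup>+x. f x * indicator B x \<partial>N) = \<mu> B" if "B \<in> sets N" for B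
    using emeasure_density[OF f(1) that] f(2) K[OF that] by simp
  have "(\<integral>\<^sup>+x. f x \<partial>N) = (\<integral>\<^sup>+x. f x * indicator (space N) x \<partial>N)"
    by (intro nn_integral_cong) simp
  then have "(\<integral>\<^sup>+x. f x \<partial>N) \<noteq> \<infinity>"
    using f_set[OF sets.top] by (simp add: \<mu>_def)
  then have f_fin: "AE x in N. f x \<noteq> \<infinity>"
    using nn_integral_PInf_AE[OF f(1)] by blast
  define u where "u x = enn2real (f x)" for x
  have u_meas: "u \<in> borel_measurable N"
    using f(1) unfolding u_def by measurable
  have u_set: "(\<integral>\<^sup>+x. ennreal (indicator B x * u x) \<partial>N) = \<mu> B" if "B \<in> sets N" for B
    using f_fin f_set[OF that]
    by (subst (asm) nn_integral_cong_AE) (auto simp: u_def less_top indicator_def mult.commute)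
  have u_int: "integrable N u"
  proof (rule integrableI_nonneg[OF u_meas])
    have "(\<integral>\<^sup>+x. ennreal (u x) \<partial>N) = (\<integral>\<^sup>+x. ennreal (indicator (space N) x * u x) \<partial>N)"
      by (intro nn_integral_cong) simp
    then show "(\<integral>\<^sup>+x. ennreal (u x) \<partial>N) < \<infinity>"
      using u_set[OF sets.top] by (simp add: \<mu>_def)
  qed (simp add: u_def)
  have u_nonneg: "0 \<le> u x" for x
    by (simp add: u_def)
  show thesis
  proof (rule that[OF u_meas u_nonneg u_int])
    fix B
    assume B: "B \<in> sets N"
    have "(\<integral>x. indicator B x * u x \<partial>N) = enn2real (\<integral>\<^sup>+x. ennreal (indicator B x * u x) \<partial>N)"
      using B u_meas by (intro integral_eq_nn_integral AE_I2) (auto simp: u_nonneg)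
    then show "(\<integral>x. indicator B x * u x \<partial>N) = \<nu> B + measure N B"
      using u_set[OF B] dom[OF B] by (simp add: \<mu>_def)
  qed
qed

lemma dominated_additive_density:
  fixes \<nu> :: "'a set \<Rightarrow> real"
  assumes "finite_measure N"
    and add: "\<And>A B. A \<in> sets N \<Longrightarrow> B \<in> sets N \<Longrightarrow> A \<inter> B = {} \<Longrightarrow> \<nu> (A \<union> B) = \<nu> A + \<nu> B"
    and dom: "\<And>B. B \<in> sets N \<Longrightarrow> \<bar>\<nu> B\<bar> \<le> measure N B"
  obtains w where "w \<in> borel_measurable N" "\<And>x. \<bar>w x\<bar> \<le> 1"
    "\<And>B. B \<in> sets N \<Longrightarrow> (\<integral>x. indicator B x * w x \<partial>N) = \<nu> B"
proof -
  interpret finite_measure N by fact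
  obtain u where u: "u \<in> borel_measurable N" "\<And>x. 0 \<le> u x" "integrable N u"
    and u_set: "\<And>B. B \<in> sets N \<Longrightarrow> (\<integral>x. indicator B x * u x \<partial>N) = \<nu> B + measure N B"
    using dominated_additive_nonneg_density[OF assms] by blast
  have ind_int: "integrable N (indicator B :: 'a \<Rightarrow> real)" if "B \<in> sets N" for B
    using that by (intro integrable_const_bound[where B=1]) auto
  have u_le_2: "AE x in N. u x \<le> 2"
  proof -
    define E where "E = {x \<in> space N. 2 < u x}"
    have E: "E \<in> sets N"
      unfolding E_def using u(1) by measurable
    have "(\<integral>x. indicator E x * (u x - 2) \<partial>N) = \<nu> E - measure N E"
      using u_set[OF E] integrable_mult_indicator[OF E u(3)] ind_int[OF E] E
      by (simp add: right_diff_distrib)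
    also have "\<dots> \<le> 0"
      using dom[OF E] by simp
    finally have "(\<integral>x. indicator E x * (u x - 2) \<partial>N) = 0"
      by (intro antisym integral_nonneg_AE) (auto simp: E_def indicator_def)
    then have "AE x in N. indicator E x * (u x - 2) = 0"
      using integrable_mult_indicator[OF E, of "\<lambda>x. u x - 2"] u(3) ind_int
      by (subst (asm) integral_nonneg_eq_0_iff_AE) (auto simp: E_def indicator_def)
    with AE_space show ?thesis
      by eventually_elim (auto simp: E_def indicator_def split: if_splits)
  qed
  define w where "w x = max (-1) (min 1 (u x - 1))" for x
  show thesis
  proof (rule that)
    show "w \<in> borel_measurable N"
      unfolding w_def using u(1) by measurable
    show "\<bar>w x\<bar> \<le> 1" for x
      by (auto simp: w_def)
    fix B
    assume B: "B \<in> sets N"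
    have "AE x in N. indicator B x * w x = indicator B x * u x - indicator B x"
      using u_le_2 by eventually_elim (auto simp: w_def indicator_def u(2))
    then have "(\<integral>x. indicator B x * w x \<partial>N) = (\<integral>x. indicator B x * u x - indicator B x \<partial>N)"
      using B u(1) by (intro integral_cong_AE) (auto simp: w_def)
    also have "\<dots> = \<nu> B"
      using u_set[OF B] integrable_mult_indicator[OF B u(3)] ind_int[OF B] B by simp
    finally show "(\<integral>x. indicator B x * w x \<partial>N) = \<nu> B" .
  qed
qed

lemma integrable_bounded_mult:
  fixes v g :: "'a \<Rightarrow> 'b::{real_normed_field, banach, second_countable_topology}"
  assumes "integrable M g" "v \<in> borel_measurable M" "AE x in M. norm (v x) \<le> C"
  shows "integrable M (\<lambda>x. v x * g x)"
proof (rule Bochner_Integration.integrable_bound)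
  show "integrable M (\<lambda>x. C * norm (g x))"
    using assms(1) by auto
  show "(\<lambda>x. v x * g x) \<in> borel_measurable M"
    using assms(1,2) by measurable
  show "AE x in M. norm (v x * g x) \<le> norm (C * norm (g x))"
    using assms(3) by eventually_elim
      (simp add: norm_mult, metis abs_ge_self mult_right_mono norm_ge_zero order_trans)
qed

lemma abs_integral_mult_diff_le:
  fixes v a b :: "'a \<Rightarrow> real"
  assumes "integrable M a" "integrable M b" "v \<in> borel_measurable M" "AE x in M. \<bar>v x\<bar> \<le> 1"
  shows "\<bar>(\<integral>x. v x * a x \<partial>M) - (\<integral>x. v x * b x \<partial>M)\<bar> \<le> (\<integral>x. \<bar>a x - b x\<bar> \<partial>M)"
proof -
  have int: "integrable M (\<lambda>x. v x * (a x - b x))"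
    using assms by (intro integrable_bounded_mult[where C=1]) auto
  have "(\<integral>x. v x * a x \<partial>M) - (\<integral>x. v x * b x \<partial>M) = (\<integral>x. v x * (a x - b x) \<partial>M)"
    using assms integrable_bounded_mult[of M _ v 1] by (simp add: right_diff_distrib)
  also have "\<bar>\<dots>\<bar> \<le> (\<integral>x. \<bar>v x * (a x - b x)\<bar> \<partial>M)"
    by (rule integral_abs_bound)
  also have "\<dots> \<le> (\<integral>x. \<bar>a x - b x\<bar> \<partial>M)"
  proof (rule integral_mono_AE)
    show "integrable M (\<lambda>x. \<bar>v x * (a x - b x)\<bar>)"
      using int by (rule integrable_abs)
    show "integrable M (\<lambda>x. \<bar>a x - b x\<bar>)"
      using assms(1,2) by auto
    show "AE x in M. \<bar>v x * (a x - b x)\<bar> \<le> \<bar>a x - b x\<bar>"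
      using assms(4) by eventually_elim (simp add: abs_mult mult_left_le_one_le)
  qed
  finally show ?thesis .
qed

lemma tendsto_integral_mult_of_indicators:
  fixes v :: "nat \<Rightarrow> 'a \<Rightarrow> real"
  assumes v: "\<And>k. v k \<in> borel_measurable N" "\<And>k. AE x in N. \<bar>v k x\<bar> \<le> 1"
    and w: "w \<in> borel_measurable N" "AE x in N. \<bar>w x\<bar> \<le> 1"
    and sets: "\<And>B. B \<in> sets N \<Longrightarrow> (\<lambda>k. \<integral>x. indicator B x * v k x \<partial>N) \<longlonglongrightarrow> (\<integral>x. indicator B x * w x \<partial>N)"
    and g: "integrable N g"
  shows "(\<lambda>k. \<integral>x. v k x * g x \<partial>N) \<longlonglongrightarrow> (\<integral>x. w x * g x \<partial>N)"
  using g
proof (induct rule: integrable_induct)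
  case (base A c)
  have "(\<lambda>x. u x * (indicator A x *\<^sub>R c)) = (\<lambda>x. c * (indicator A x * u x))" for u :: "'a \<Rightarrow> real"
    by (auto simp: fun_eq_iff)
  then show ?case
    using tendsto_mult_left[OF sets[OF base(1)], of c] by simp
next
  case (add f g)
  have split: "(\<integral>x. u x * (f x + g x) \<partial>N) = (\<integral>x. u x * f x \<partial>N) + (\<integral>x. u x * g x \<partial>N)"
    if "u \<in> borel_measurable N" "AE x in N. \<bar>u x\<bar> \<le> 1" for u
    using integrable_bounded_mult[OF add(1) that(1), of 1] integrable_bounded_mult[OF add(3) that(1), of 1] that(2)
    by (simp add: distrib_left)
  show ?case
    unfolding split[OF v] split[OF w] using add(2,4) by (rule tendsto_add)
next
  case (lim g s)
  have "(\<lambda>i. \<integral>x. \<bar>g x - s i x\<bar> \<partial>N) \<longlonglongrightarrow> (\<integral>x. 0 \<partial>N)"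
  proof (rule integral_dominated_convergence[where w="\<lambda>x. 3 * \<bar>g x\<bar>"])
    show "AE x in N. (\<lambda>i. \<bar>g x - s i x\<bar>) \<longlonglongrightarrow> 0"
    proof (rule AE_I2)
      fix x
      assume "x \<in> space N"
      then have "(\<lambda>i. \<bar>g x - s i x\<bar>) \<longlonglongrightarrow> \<bar>g x - g x\<bar>"
        using lim(3) by (intro tendsto_rabs tendsto_diff tendsto_const)
      then show "(\<lambda>i. \<bar>g x - s i x\<bar>) \<longlonglongrightarrow> 0"
        by simp
    qed
    show "AE x in N. norm \<bar>g x - s i x\<bar> \<le> 3 * \<bar>g x\<bar>" for i
      using lim(4) by (intro AE_I2) (smt (verit) real_norm_def)
  qed (use lim(1,5) in auto)
  then have L1: "(\<lambda>i. \<integral>x. \<bar>g x - s i x\<bar> \<partial>N) \<longlonglongrightarrow> 0"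
    by simp
  show ?case
  proof (rule tendsto_uniform_approx)
    fix e :: real
    assume "e > 0"
    then obtain i where "norm ((\<integral>x. \<bar>g x - s i x\<bar> \<partial>N) - 0) < e"
      using LIMSEQ_D[OF L1] by blast
    then have "(\<integral>x. \<bar>g x - s i x\<bar> \<partial>N) \<le> e"
      by simp
    then show "\<exists>y L'. y \<longlonglongrightarrow> L' \<and> \<bar>(\<integral>x. w x * g x \<partial>N) - L'\<bar> \<le> e \<and>
        (\<forall>k. \<bar>(\<integral>x. v k x * g x \<partial>N) - y k\<bar> \<le> e)"
      using lim(2)[of i] abs_integral_mult_diff_le[OF lim(5,1) w] abs_integral_mult_diff_le[OF lim(5,1) v]
      by (blast intro: order_trans)
  qed
qed

lemma countable_Int_stable_generator:
  fixes v :: "nat \<Rightarrow> 'a \<Rightarrow> real"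
  assumes "\<And>k. v k \<in> borel_measurable M"
  obtains P where "countable P" "Int_stable P" "P \<subseteq> sets M" "space M \<in> P"
    "\<And>k. v k \<in> borel_measurable (sigma (space M) P)"
proof -
  define G where "G = (\<lambda>(k, q). {x \<in> space M. v k x < q}) ` (UNIV \<times> \<rat>)"
  define P where "P = (\<lambda>S. space M \<inter> \<Inter>S) ` {S. finite S \<and> S \<subseteq> G}"
  have G_sets: "G \<subseteq> sets M"
    unfolding G_def using assms by auto
  show thesis
  proof (rule that)
    show "countable P"
      unfolding P_def G_def by (auto intro!: countable_image countable_SIGMA countable_rat countable_Collect_finite_subset)
    show "Int_stable P"
      unfolding Int_stable_def P_def
    proof safe
      fix S S'
      assume "finite S" "S \<subseteq> G" "finite S'" "S' \<subseteq> G"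
      then show "(space M \<inter> \<Inter>S) \<inter> (space M \<inter> \<Inter>S') \<in> (\<lambda>S. space M \<inter> \<Inter>S) ` {S. finite S \<and> S \<subseteq> G}"
        by (intro image_eqI[where x="S \<union> S'"]) auto
    qed
    show "P \<subseteq> sets M"
    proof
      fix X
      assume "X \<in> P"
      then obtain S where S: "finite S" "S \<subseteq> G" "X = space M \<inter> \<Inter>S"
        unfolding P_def by auto
      from S(1,2) have "space M \<inter> \<Inter>S \<in> sets M"
        by (induction S rule: finite_induct) (use G_sets in \<open>auto simp: Int_left_commute\<close>)
      then show "X \<in> sets M"
        using S(3) by simp
    qed
    show "space M \<in> P"
      unfolding P_def by (auto intro!: image_eqI[where x="{}"])
    have P_pow: "P \<subseteq> Pow (space M)"
      unfolding P_def by auto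
    show "v k \<in> borel_measurable (sigma (space M) P)" for k
      unfolding borel_measurable_iff_less
    proof
      fix a
      have "{x \<in> space M. v k x < q} \<in> P" if "q \<in> \<rat>" for q
        using that unfolding P_def G_def by (intro image_eqI[where x="{{x \<in> space M. v k x < q}}"]) auto
      then have "(\<Union>q\<in>{q \<in> \<rat>. q < a}. {x \<in> space M. v k x < q}) \<in> sets (sigma (space M) P)"
        using P_pow countable_rat
        by (intro sets.countable_UN') (auto intro: countable_subset[of _ \<rat>])
      moreover have "{x \<in> space (sigma (space M) P). v k x < a} = (\<Union>q\<in>{q \<in> \<rat>. q < a}. {x \<in> space M. v k x < q})"
        using P_pow by (auto dest: Rats_dense_in_real)
      ultimately show "{x \<in> space (sigma (space M) P). v k x < a} \<in> sets (sigma (space M) P)"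
        by simp
    qed
  qed
qed

lemma weak_subseq_countably_generated:
  fixes v :: "nat \<Rightarrow> 'a \<Rightarrow> real"
  assumes N: "finite_measure N"
    and P: "countable P" "Int_stable P" "space N \<in> P" "sets N = sigma_sets (space N) P"
    and v: "\<And>k. v k \<in> borel_measurable N" "\<And>k. AE x in N. \<bar>v k x\<bar> \<le> 1"
  obtains r w where "strict_mono r" "w \<in> borel_measurable N" "\<And>x. \<bar>w x\<bar> \<le> 1"
    "\<And>g. integrable N g \<Longrightarrow> (\<lambda>k. \<integral>x. v (r k) x * g x \<partial>N) \<longlonglongrightarrow> (\<integral>x. w x * g x \<partial>N)"
proof -
  interpret finite_measure N by fact
  define I where "I B k = (\<integral>x. indicator B x * v k x \<partial>N)" for B k
  have P_sets: "P \<subseteq> sets N"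
    using P(4) by auto
  have I_le: "\<bar>I B k\<bar> \<le> measure N B" if "B \<in> sets N" for B k
    unfolding I_def using abs_integral_indicator_mult_le_measure[OF N that v] .
  have "\<bar>I (from_nat_into P i) k\<bar> \<le> measure N (space N)" for i k
  proof -
    have "from_nat_into P i \<in> sets N"
      using from_nat_into[of P i] P(3) P_sets by auto
    then show ?thesis
      using I_le bounded_measure by (blast intro: order_trans)
  qed
  then obtain r where r: "strict_mono r" "\<And>i. convergent (\<lambda>k. I (from_nat_into P i) (r k))"
    using bounded_double_seq_diagonal_subseq[of "\<lambda>i k. I (from_nat_into P i) k"] by blast
  have I_conv: "convergent (\<lambda>k. I B (r k))" if "B \<in> sets N" for B
    unfolding I_def
  proof (rule convergent_integral_indicator_mult_sigma_sets[OF N _ _ P(2) P_sets P(3)])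
    show "B \<in> sigma_sets (space N) P"
      using that P(4) by simp
    show "convergent (\<lambda>k. \<integral>x. indicator A x * v (r k) x \<partial>N)" if "A \<in> P" for A
      using r(2) from_nat_into_surj[OF P(1) that] unfolding I_def by force
  qed (use v in auto)
  define \<nu> where "\<nu> B = lim (\<lambda>k. I B (r k))" for B
  have \<nu>: "(\<lambda>k. I B (r k)) \<longlonglongrightarrow> \<nu> B" if "B \<in> sets N" for B
    using I_conv[OF that] unfolding \<nu>_def by (simp add: convergent_LIMSEQ_iff)
  have v_int: "integrable N (v k)" for k
    using v by (intro integrable_const_bound[where B=1]) auto
  obtain w where w: "w \<in> borel_measurable N" "\<And>x. \<bar>w x\<bar> \<le> 1"
    and w_set: "\<And>B. B \<in> sets N \<Longrightarrow> (\<integral>x. indicator B x * w x \<partial>N) = \<nu> B"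
  proof (rule dominated_additive_density[OF N])
    fix A B
    assume AB: "A \<in> sets N" "B \<in> sets N" "A \<inter> B = {}"
    then have "(\<lambda>k. I (A \<union> B) (r k)) \<longlonglongrightarrow> \<nu> A + \<nu> B"
      using tendsto_add[OF \<nu>[of A] \<nu>[of B]] integral_indicator_mult_Un[OF v_int] by (simp add: I_def)
    then show "\<nu> (A \<union> B) = \<nu> A + \<nu> B"
      using \<nu>[of "A \<union> B"] AB by (blast intro: LIMSEQ_unique)
  next
    fix B
    assume "B \<in> sets N"
    then show "\<bar>\<nu> B\<bar> \<le> measure N B"
      using tendsto_rabs[OF \<nu>] I_le by (blast intro: LIMSEQ_le_const2)
  qed blast
  show thesis
  proof (rule that[OF r(1) w])
    fix g :: "'a \<Rightarrow> real"
    assume "integrable N g"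
    then show "(\<lambda>k. \<integral>x. v (r k) x * g x \<partial>N) \<longlonglongrightarrow> (\<integral>x. w x * g x \<partial>N)"
      using \<nu> w_set w v by (intro tendsto_integral_mult_of_indicators) (auto simp: I_def)
  qed
qed

lemma weak_subseq_bounded_real:
  fixes v :: "nat \<Rightarrow> 'a \<Rightarrow> real"
  assumes M: "finite_measure M" and v: "\<And>k. v k \<in> borel_measurable M" "\<And>k. AE x in M. \<bar>v k x\<bar> \<le> 1"
  obtains r w where "strict_mono r" "w \<in> borel_measurable M" "\<And>x. \<bar>w x\<bar> \<le> 1"
    "\<And>h. integrable M h \<Longrightarrow> (\<lambda>k. \<integral>x. v (r k) x * h x \<partial>M) \<longlonglongrightarrow> (\<integral>x. w x * h x \<partial>M)"
proof -
  interpret finite_measure M by fact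
  obtain P where P: "countable P" "Int_stable P" "P \<subseteq> sets M" "space M \<in> P"
    and vF: "\<And>k. v k \<in> borel_measurable (sigma (space M) P)"
    using countable_Int_stable_generator[of v M, OF v(1)] by blast
  define F where "F = sigma (space M) P"
  have P_pow: "P \<subseteq> Pow (space M)"
    using P(3) sets.sets_into_space by blast
  have sets_F: "sets F = sigma_sets (space M) P"
    unfolding F_def using P_pow by (rule sets_measure_of)
  have space_F: "space F = space M"
    unfolding F_def by (simp add: space_measure_of_conv)
  have sub: "subalgebra M F"
    unfolding subalgebra_def sets_F space_F using sets.sigma_sets_subset[OF P(3)] by simp
  interpret finite_measure_subalgebra M F
    by unfold_locales (rule sub)
  define N where "N = restr_to_subalg M F"
  have sets_N: "sets N = sigma_sets (space N) P"
    unfolding N_def sets_restr_to_subalg[OF sub] space_restr_to_subalg sets_F ..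
  have meas_N: "borel_measurable N = borel_measurable F"
    unfolding N_def by (rule measurable_cong_sets[OF sets_restr_to_subalg[OF sub] refl])
  have vN: "v k \<in> borel_measurable N" for k
    unfolding meas_N using vF[folded F_def] .
  note vF[folded F_def, measurable]
  have N: "finite_measure N"
    unfolding N_def by (rule finite_measure_restr_to_subalg[OF sub M])
  obtain r w where r: "strict_mono r" and w: "w \<in> borel_measurable N" "\<And>x. \<bar>w x\<bar> \<le> 1"
    and conv: "\<And>g. integrable N g \<Longrightarrow> (\<lambda>k. \<integral>x. v (r k) x * g x \<partial>N) \<longlonglongrightarrow> (\<integral>x. w x * g x \<partial>N)"
  proof (rule weak_subseq_countably_generated[of N P v, OF N P(1,2) _ sets_N vN])
    show "space N \<in> P"
      using P(4) by (simp add: N_def space_restr_to_subalg)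
    show "AE x in N. \<bar>v k x\<bar> \<le> 1" for k
      unfolding N_def by (intro AE_restr_to_subalg2[OF sub] v(2)) measurable
  qed blast
  have wF: "w \<in> borel_measurable F"
    using w(1) unfolding meas_N .
  have wM: "w \<in> borel_measurable M"
    by (rule measurable_from_subalg[OF sub wF])
  show thesis
  proof (rule that[OF r wM w(2)])
    fix h :: "'a \<Rightarrow> real"
    assume h: "integrable M h"
    have cond_exp: "(\<integral>x. u x * h x \<partial>M) = (\<integral>x. u x * real_cond_exp M F h x \<partial>N)"
      if u: "u \<in> borel_measurable F" "AE x in M. \<bar>u x\<bar> \<le> 1" for u
    proof -
      have "integrable M (\<lambda>x. u x * h x)"
        using h measurable_from_subalg[OF sub u(1)] u(2) by (intro integrable_bounded_mult[where C=1]) auto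
      then have "(\<integral>x. u x * h x \<partial>M) = (\<integral>x. u x * real_cond_exp M F h x \<partial>M)"
        using h u(1) by (simp add: real_cond_exp_intg(2))
      also have "\<dots> = (\<integral>x. u x * real_cond_exp M F h x \<partial>N)"
        unfolding N_def
        by (intro integral_subalgebra2[OF sub, symmetric] borel_measurable_times u(1) borel_measurable_cond_exp)
      finally show ?thesis .
    qed
    have wAE: "AE x in M. \<bar>w x\<bar> \<le> 1"
      using w(2) by simp
    have "integrable N (real_cond_exp M F h)"
      unfolding N_def by (intro integrable_in_subalg[OF sub] borel_measurable_cond_exp real_cond_exp_int(1) h)
    then show "(\<lambda>k. \<integral>x. v (r k) x * h x \<partial>M) \<longlonglongrightarrow> (\<integral>x. w x * h x \<partial>M)"
      unfolding cond_exp[OF wF wAE] cond_exp[OF vF[folded F_def] v(2)] by (rule conv)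
  qed
qed

lemma tendsto_integral_of_real_mult:
  fixes u :: "nat \<Rightarrow> 'a \<Rightarrow> real" and h :: "'a \<Rightarrow> complex"
  assumes conv: "\<And>g :: 'a \<Rightarrow> real. integrable M g \<Longrightarrow> (\<lambda>k. \<integral>x. u k x * g x \<partial>M) \<longlonglongrightarrow> (\<integral>x. w x * g x \<partial>M)"
    and u: "\<And>k. u k \<in> borel_measurable M" "\<And>k. AE x in M. \<bar>u k x\<bar> \<le> C"
    and w: "w \<in> borel_measurable M" "AE x in M. \<bar>w x\<bar> \<le> C"
    and h: "integrable M h"
  shows "(\<lambda>k. \<integral>x. of_real (u k x) * h x \<partial>M) \<longlonglongrightarrow> (\<integral>x. of_real (w x) * h x \<partial>M)"
proof -
  have Re_Im: "Re (\<integral>x. of_real (z x) * h x \<partial>M) = (\<integral>x. z x * Re (h x) \<partial>M)"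
    "Im (\<integral>x. of_real (z x) * h x \<partial>M) = (\<integral>x. z x * Im (h x) \<partial>M)"
    if "z \<in> borel_measurable M" "AE x in M. \<bar>z x\<bar> \<le> C" for z
    using integrable_bounded_mult[OF h, of "\<lambda>x. of_real (z x)" C] that
    by (simp_all flip: integral_Re integral_Im)
  show ?thesis
    unfolding tendsto_complex_iff Re_Im[OF u] Re_Im[OF w]
    using conv[of "\<lambda>x. Re (h x)"] conv[of "\<lambda>x. Im (h x)"] h by simp
qed

lemma integral_mult_eq_Re_Im:
  fixes z g :: "'a \<Rightarrow> complex"
  assumes "integrable M g" "z \<in> borel_measurable M" "AE x in M. cmod (z x) \<le> C"
  shows "(\<integral>x. z x * g x \<partial>M) =
    (\<integral>x. of_real (Re (z x)) * g x \<partial>M) + \<i> * (\<integral>x. of_real (Im (z x)) * g x \<partial>M)"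
proof -
  have "integrable M (\<lambda>x. of_real (f (z x)) * g x)" if "\<And>c. \<bar>f c\<bar> \<le> cmod c" "f \<in> borel_measurable borel" for f
    using assms that(2) by (intro integrable_bounded_mult[where C=C]) (auto elim!: eventually_mono intro: order_trans[OF that(1)])
  from this[of Re] this[of Im] have "integrable M (\<lambda>x. of_real (Re (z x)) * g x)" "integrable M (\<lambda>x. of_real (Im (z x)) * g x)"
    by (auto simp: abs_Re_le_cmod abs_Im_le_cmod)
  moreover have "z x * g x = of_real (Re (z x)) * g x + \<i> * (of_real (Im (z x)) * g x)" for x
    by (subst complex_eq[of "z x"]) (simp add: algebra_simps)
  ultimately show ?thesis
    by simp
qed

lemma weak_subseq_bounded_complex:
  fixes D :: "nat \<Rightarrow> 'a \<Rightarrow> complex"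
  assumes M: "finite_measure M" and D: "\<And>k. D k \<in> borel_measurable M" "\<And>k. AE x in M. cmod (D k x) \<le> 1"
  obtains r ft where "strict_mono r" "ft \<in> borel_measurable M" "\<And>x. cmod (ft x) \<le> 2"
    "\<And>h. integrable M h \<Longrightarrow> (\<lambda>k. \<integral>x. D (r k) x * cnj (h x) \<partial>M) \<longlonglongrightarrow> (\<integral>x. ft x * cnj (h x) \<partial>M)"
proof -
  have Re_D: "AE x in M. \<bar>Re (D k x)\<bar> \<le> 1" and Im_D: "AE x in M. \<bar>Im (D k x)\<bar> \<le> 1" for k
    using D(2)[of k] by (auto elim!: eventually_mono intro: order_trans[OF abs_Re_le_cmod] order_trans[OF abs_Im_le_cmod])
  have Re_Im_meas: "(\<lambda>x. Re (D k x)) \<in> borel_measurable M" "(\<lambda>x. Im (D k x)) \<in> borel_measurable M" for k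
    using D(1) by simp_all
  obtain r1 w1 where r1: "strict_mono r1" and w1: "w1 \<in> borel_measurable M" "\<And>x. \<bar>w1 x\<bar> \<le> 1"
    and conv1: "\<And>g. integrable M g \<Longrightarrow> (\<lambda>k. \<integral>x. Re (D (r1 k) x) * g x \<partial>M) \<longlonglongrightarrow> (\<integral>x. w1 x * g x \<partial>M)"
    using weak_subseq_bounded_real[of M "\<lambda>k x. Re (D k x)", OF M Re_Im_meas(1) Re_D] by blast
  obtain r2 w2 where r2: "strict_mono r2" and w2: "w2 \<in> borel_measurable M" "\<And>x. \<bar>w2 x\<bar> \<le> 1"
    and conv2: "\<And>g. integrable M g \<Longrightarrow> (\<lambda>k. \<integral>x. Im (D (r1 (r2 k)) x) * g x \<partial>M) \<longlonglongrightarrow> (\<integral>x. w2 x * g x \<partial>M)"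
    using weak_subseq_bounded_real[of M "\<lambda>k x. Im (D (r1 k) x)", OF M Re_Im_meas(2) Im_D] by blast
  define ft where "ft x = complex_of_real (w1 x) + \<i> * complex_of_real (w2 x)" for x
  have ft: "ft \<in> borel_measurable M" "cmod (ft x) \<le> 2" for x
  proof -
    show "ft \<in> borel_measurable M"
      unfolding ft_def using w1(1) w2(1) by measurable
    have "cmod (ft x) \<le> \<bar>w1 x\<bar> + \<bar>w2 x\<bar>"
      using cmod_le[of "ft x"] by (simp add: ft_def)
    then show "cmod (ft x) \<le> 2"
      using w1(2)[of x] w2(2)[of x] by linarith
  qed
  show thesis
  proof (rule that[OF strict_mono_o[OF r1 r2] ft])
    fix h :: "'a \<Rightarrow> complex"
    assume h: "integrable M h"
    have cnj_h: "integrable M (\<lambda>x. cnj (h x))"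
      using h by simp
    have "(\<lambda>k. \<integral>x. of_real (Re (D (r1 (r2 k)) x)) * cnj (h x) \<partial>M) \<longlonglongrightarrow> (\<integral>x. of_real (w1 x) * cnj (h x) \<partial>M)"
      using LIMSEQ_subseq_LIMSEQ[OF conv1 r2] w1 D(1) Re_D cnj_h
      by (intro tendsto_integral_of_real_mult[where C=1]) (auto simp: comp_def)
    moreover have "(\<lambda>k. \<integral>x. of_real (Im (D (r1 (r2 k)) x)) * cnj (h x) \<partial>M) \<longlonglongrightarrow> (\<integral>x. of_real (w2 x) * cnj (h x) \<partial>M)"
      using conv2 w2 D(1) Im_D cnj_h
      by (intro tendsto_integral_of_real_mult[where C=1]) auto
    ultimately show "(\<lambda>k. \<integral>x. D ((r1 \<circ> r2) k) x * cnj (h x) \<partial>M) \<longlonglongrightarrow> (\<integral>x. ft x * cnj (h x) \<partial>M)"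
      using integral_mult_eq_Re_Im[OF cnj_h D(1,2)] integral_mult_eq_Re_Im[OF cnj_h ft(1), of 2] ft(2)
      by (auto simp: ft_def intro!: tendsto_intros)
  qed
qed

section \<open>Complex L2 inner products and conditional expectation\<close>

lemma AE_norm_mult_le:
  fixes u v :: "'a \<Rightarrow> 'b::real_normed_div_algebra"
  assumes "AE x in M. norm (u x) \<le> C" "AE x in M. norm (v x) \<le> D"
  shows "AE x in M. norm (u x * v x) \<le> C * D"
  using assms by eventually_elim (simp add: norm_mult mult_mono')

lemma borel_measurable_cnj [measurable]:
  fixes f :: "'a \<Rightarrow> complex"
  assumes "f \<in> borel_measurable M"
  shows "(\<lambda>x. cnj (f x)) \<in> borel_measurable M"
  using assms by (intro borel_measurable_continuous_on[OF continuous_on_cnj]) auto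

lemma L2norm_power2: "(L2norm M u)\<^sup>2 = (\<integral>x. (cmod (u x))\<^sup>2 \<partial>M)"
  unfolding L2norm_def by (simp add: integral_nonneg_AE)

lemma integral_mult_cnj_self: "(\<integral>x. u x * cnj (u x) \<partial>M) = of_real ((L2norm M u)\<^sup>2)"
  unfolding L2norm_power2 by (simp flip: complex_norm_square of_real_power)

context prob_space
begin

lemma integral_cmod_le_L2norm:
  assumes "u \<in> borel_measurable M" "AE x in M. cmod (u x) \<le> C"
  shows "(\<integral>x. cmod (u x) \<partial>M) \<le> L2norm M u"
proof -
  have "integrable M (\<lambda>x. cmod (u x))"
    using assms by (intro integrable_const_bound[where B=C]) auto
  moreover have "integrable M (\<lambda>x. (cmod (u x))\<^sup>2)"
    using assms by (intro integrable_const_bound[where B="C\<^sup>2"]) (auto elim!: eventually_mono intro: power_mono)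
  moreover have "0 \<le> variance (\<lambda>x. cmod (u x))"
    by (intro integral_nonneg_AE) simp
  ultimately have "(\<integral>x. cmod (u x) \<partial>M)\<^sup>2 \<le> (\<integral>x. (cmod (u x))\<^sup>2 \<partial>M)"
    using variance_eq[of "\<lambda>x. cmod (u x)"] by simp
  then show ?thesis
    unfolding L2norm_def by (rule real_le_rsqrt)
qed

lemma cmod_integral_mult_cnj_le_L2norm:
  assumes G: "G \<in> borel_measurable M" "AE x in M. cmod (G x) \<le> C"
    and u: "u \<in> borel_measurable M" "AE x in M. cmod (u x) \<le> 1"
  shows "cmod (\<integral>x. G x * cnj (u x) \<partial>M) \<le> L2norm M G"
proof -
  have "cmod (\<integral>x. G x * cnj (u x) \<partial>M) \<le> (\<integral>x. cmod (G x * cnj (u x)) \<partial>M)"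
    by (rule integral_norm_bound)
  also have "\<dots> \<le> (\<integral>x. cmod (G x) \<partial>M)"
  proof (rule integral_mono_AE)
    have "AE x in M. cmod (G x * cnj (u x)) \<le> cmod (G x)"
      using u(2) by eventually_elim (simp add: norm_mult mult_left_le)
    then show "AE x in M. cmod (G x * cnj (u x)) \<le> cmod (G x)" .
    show "integrable M (\<lambda>x. cmod (G x))"
      using G by (intro integrable_const_bound[where B=C]) auto
    show "integrable M (\<lambda>x. cmod (G x * cnj (u x)))"
      using G(1) u(1) \<open>AE x in M. cmod (G x * cnj (u x)) \<le> cmod (G x)\<close> G(2)
      by (intro integrable_const_bound[where B=C]) (auto elim: eventually_elim2)
  qed
  also have "\<dots> \<le> L2norm M G"
    by (rule integral_cmod_le_L2norm[OF G])
  finally show ?thesis .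
qed

lemma integrable_if_in_L2:
  assumes "in_L2 M h"
  shows "integrable M h"
proof (rule Bochner_Integration.integrable_bound)
  show "integrable M (\<lambda>x. 1 + (cmod (h x))\<^sup>2)"
    using assms by (simp add: in_L2_def)
  show "h \<in> borel_measurable M"
    using assms by (simp add: in_L2_def)
  have "t \<le> 1 + t\<^sup>2" if "0 \<le> t" for t :: real
  proof (cases "t \<le> 1")
    case True
    then show ?thesis by (simp add: add_increasing2)
  next
    case False
    then have "t \<le> t * t"
      by (simp add: mult_le_cancel_left1)
    then show ?thesis
      by (simp add: power2_eq_square)
  qed
  then show "AE x in M. norm (h x) \<le> norm (1 + (cmod (h x))\<^sup>2)"
    by simp
qed

lemma weak_L2_limit_if_bounded:
  assumes "ft \<in> borel_measurable M" "AE x in M. cmod (ft x) \<le> C"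
    and "\<And>h. integrable M h \<Longrightarrow> (\<lambda>k. \<integral>x. F k x * cnj (h x) \<partial>M) \<longlonglongrightarrow> (\<integral>x. ft x * cnj (h x) \<partial>M)"
  shows "weak_L2_limit M F ft"
  unfolding weak_L2_limit_def
proof (intro conjI allI impI)
  have "AE x in M. norm ((cmod (ft x))\<^sup>2) \<le> C\<^sup>2"
    using assms(2) by eventually_elim (simp add: power_mono)
  then show "in_L2 M ft"
    unfolding in_L2_def using assms(1) by (auto intro: integrable_const_bound[where B="C\<^sup>2"])
  fix h
  assume "in_L2 M h"
  then show "(\<lambda>k. \<integral>x. F k x * cnj (h x) \<partial>M) \<longlonglongrightarrow> (\<integral>x. ft x * cnj (h x) \<partial>M)"
    by (intro assms(3) integrable_if_in_L2)
qed

end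

context finite_measure_subalgebra
begin

lemma real_cond_exp_abs_le_const:
  fixes \<phi> :: "'a \<Rightarrow> real"
  assumes "\<phi> \<in> borel_measurable M" "AE x in M. \<bar>\<phi> x\<bar> \<le> C"
  shows "AE x in M. \<bar>real_cond_exp M F \<phi> x\<bar> \<le> C"
proof -
  have int: "integrable M \<phi>"
    using assms by (intro integrable_const_bound[where B=C]) auto
  have "AE x in M. real_cond_exp M F \<phi> x \<le> C"
    using assms(2) by (intro real_cond_exp_le_c[OF int]) auto
  moreover have "AE x in M. - C \<le> real_cond_exp M F \<phi> x"
    using assms(2) by (intro real_cond_exp_ge_c[OF int]) auto
  ultimately show ?thesis
    by eventually_elim auto
qed

lemma integral_of_real_cond_exp_mult:
  fixes \<phi> :: "'a \<Rightarrow> real" and g :: "'a \<Rightarrow> complex"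
  assumes \<phi>: "\<phi> \<in> borel_measurable M" "AE x in M. \<bar>\<phi> x\<bar> \<le> C"
    and g: "g \<in> borel_measurable F" "AE x in M. cmod (g x) \<le> D"
  shows "(\<integral>x. of_real (real_cond_exp M F \<phi> x) * g x \<partial>M) = (\<integral>x. of_real (\<phi> x) * g x \<partial>M)"
proof -
  have gM: "g \<in> borel_measurable M"
    by (rule measurable_from_subalg[OF subalg g(1)])
  have g_int: "integrable M g"
    using gM g(2) by (intro integrable_const_bound[where B=D])
  have real_part: "(\<integral>x. real_cond_exp M F \<phi> x * u x \<partial>M) = (\<integral>x. \<phi> x * u x \<partial>M)"
    if "u \<in> borel_measurable F" "AE x in M. \<bar>u x\<bar> \<le> D" for u
  proof -
    have "AE x in M. norm (u x * \<phi> x) \<le> D * C"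
      using that(2) \<phi>(2) by eventually_elim (auto simp: abs_mult intro: mult_mono')
    then have "integrable M (\<lambda>x. u x * \<phi> x)"
      using \<phi>(1) measurable_from_subalg[OF subalg that(1)] by (intro integrable_const_bound) auto
    then show ?thesis
      using real_cond_exp_intg(2)[of u \<phi>] that(1) \<phi>(1) by (simp add: mult.commute)
  qed
  have Re_Im: "AE x in M. \<bar>Re (g x)\<bar> \<le> D" "AE x in M. \<bar>Im (g x)\<bar> \<le> D"
    using g(2) by (auto elim!: eventually_mono intro: order_trans[OF abs_Re_le_cmod] order_trans[OF abs_Im_le_cmod])
  have "integrable M (\<lambda>x. of_real (z x) * g x)" if "z \<in> borel_measurable M" "AE x in M. \<bar>z x\<bar> \<le> C" for z
    using that by (intro integrable_bounded_mult[OF g_int, where C=C]) auto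
  from this[OF \<phi>] this[OF borel_measurable_cond_exp2 real_cond_exp_abs_le_const[OF \<phi>]]
  show ?thesis
    using real_part[OF _ Re_Im(1)] real_part[OF _ Re_Im(2)] g(1)
    by (intro complex_eqI) (simp_all flip: integral_Re integral_Im)
qed

lemma cond_exp_c_measurable: "cond_exp_c M F f \<in> borel_measurable F"
  unfolding cond_exp_c_def by measurable

lemma cond_exp_c_bounded:
  assumes "f \<in> borel_measurable M" "AE x in M. cmod (f x) \<le> C"
  shows "AE x in M. cmod (cond_exp_c M F f x) \<le> 2 * C"
proof -
  have Re_Im: "AE x in M. \<bar>Re (f x)\<bar> \<le> C" "AE x in M. \<bar>Im (f x)\<bar> \<le> C"
    using assms(2) by (auto elim!: eventually_mono intro: order_trans[OF abs_Re_le_cmod] order_trans[OF abs_Im_le_cmod])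
  have "AE x in M. \<bar>real_cond_exp M F (\<lambda>y. Re (f y)) x\<bar> \<le> C"
    by (rule real_cond_exp_abs_le_const[OF _ Re_Im(1)]) (use assms(1) in simp)
  moreover have "AE x in M. \<bar>real_cond_exp M F (\<lambda>y. Im (f y)) x\<bar> \<le> C"
    by (rule real_cond_exp_abs_le_const[OF _ Re_Im(2)]) (use assms(1) in simp)
  ultimately show ?thesis
  proof eventually_elim
    fix x
    assume "\<bar>real_cond_exp M F (\<lambda>y. Re (f y)) x\<bar> \<le> C" "\<bar>real_cond_exp M F (\<lambda>y. Im (f y)) x\<bar> \<le> C"
    moreover have "cmod (cond_exp_c M F f x) \<le>
        \<bar>real_cond_exp M F (\<lambda>y. Re (f y)) x\<bar> + \<bar>real_cond_exp M F (\<lambda>y. Im (f y)) x\<bar>"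
      using cmod_le[of "cond_exp_c M F f x"] by (simp add: cond_exp_c_def)
    ultimately show "cmod (cond_exp_c M F f x) \<le> 2 * C"
      by linarith
  qed
qed

lemma integral_cond_exp_c_mult:
  assumes f: "f \<in> borel_measurable M" "AE x in M. cmod (f x) \<le> C"
    and g: "g \<in> borel_measurable F" "AE x in M. cmod (g x) \<le> D"
  shows "(\<integral>x. cond_exp_c M F f x * g x \<partial>M) = (\<integral>x. f x * g x \<partial>M)"
proof -
  have g_int: "integrable M g"
    using measurable_from_subalg[OF subalg g(1)] g(2) by (intro integrable_const_bound[where B=D])
  have "AE x in M. \<bar>Re (f x)\<bar> \<le> C" "AE x in M. \<bar>Im (f x)\<bar> \<le> C"
    using f(2) by (auto elim!: eventually_mono intro: order_trans[OF abs_Re_le_cmod] order_trans[OF abs_Im_le_cmod])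
  then show ?thesis
    unfolding integral_mult_eq_Re_Im[OF g_int measurable_from_subalg[OF subalg cond_exp_c_measurable]
        cond_exp_c_bounded[OF f]]
      integral_mult_eq_Re_Im[OF g_int f]
    using f(1) g by (simp add: cond_exp_c_def integral_of_real_cond_exp_mult)
qed

end

lemma (in prob_space) L2norm_le_bound:
  assumes "u \<in> borel_measurable M" "AE x in M. cmod (u x) \<le> C"
  shows "L2norm M u \<le> C"
proof -
  have "AE x in M. 0 \<le> C"
    using assms(2) by eventually_elim (rule order_trans[OF norm_ge_zero])
  then have "0 \<le> C"
    by simp
  have sq_le: "AE x in M. (cmod (u x))\<^sup>2 \<le> C\<^sup>2"
    using assms(2) by eventually_elim (simp add: power_mono)
  moreover have "integrable M (\<lambda>x. (cmod (u x))\<^sup>2)"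
    using sq_le assms(1) by (intro integrable_const_bound[where B="C\<^sup>2"]) auto
  ultimately have "(\<integral>x. (cmod (u x))\<^sup>2 \<partial>M) \<le> (\<integral>x. C\<^sup>2 \<partial>M)"
    by (intro integral_mono_AE) auto
  then have "(\<integral>x. (cmod (u x))\<^sup>2 \<partial>M) \<le> C\<^sup>2"
    by (simp add: prob_space)
  then show ?thesis
    unfolding L2norm_def using real_sqrt_le_mono \<open>0 \<le> C\<close> by fastforce
qed

lemma Re_integral_mult_cnj_le_L2norm_cond_exp_c:
  assumes "prob_space M" "subalgebra M F"
    and ft: "ft \<in> borel_measurable M" "AE x in M. cmod (ft x) \<le> C"
    and u: "u \<in> borel_measurable F" "AE x in M. cmod (u x) \<le> 1"
  shows "Re (\<integral>x. ft x * cnj (u x) \<partial>M) \<le> L2norm M (cond_exp_c M F ft)"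
proof -
  interpret prob_space M by fact
  interpret finite_measure_subalgebra M F
    by unfold_locales fact
  have "Re (\<integral>x. ft x * cnj (u x) \<partial>M) = Re (\<integral>x. cond_exp_c M F ft x * cnj (u x) \<partial>M)"
    using u by (subst integral_cond_exp_c_mult[OF ft]) auto
  also have "\<dots> \<le> cmod (\<integral>x. cond_exp_c M F ft x * cnj (u x) \<partial>M)"
    by (rule complex_Re_le_cmod)
  also have "\<dots> \<le> L2norm M (cond_exp_c M F ft)"
    using measurable_from_subalg[OF subalg cond_exp_c_measurable] cond_exp_c_bounded[OF ft]
      measurable_from_subalg[OF subalg u(1)] u(2)
    by (rule cmod_integral_mult_cnj_le_L2norm)
  finally show ?thesis .
qed

lemma integral_mult_cnj_cond_exp_c:
  assumes "prob_space M" "subalgebra M F"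
    and ft: "ft \<in> borel_measurable M" "AE x in M. cmod (ft x) \<le> C"
  shows "(\<integral>x. ft x * cnj (cond_exp_c M F ft x) \<partial>M) = of_real ((L2norm M (cond_exp_c M F ft))\<^sup>2)"
proof -
  interpret prob_space M by fact
  interpret finite_measure_subalgebra M F
    by unfold_locales fact
  have "(\<integral>x. ft x * cnj (cond_exp_c M F ft x) \<partial>M) =
      (\<integral>x. cond_exp_c M F ft x * cnj (cond_exp_c M F ft x) \<partial>M)"
    using cond_exp_c_measurable cond_exp_c_bounded[OF ft]
    by (intro integral_cond_exp_c_mult[OF ft, symmetric]) auto
  then show ?thesis
    by (simp add: integral_mult_cnj_self)
qed

section \<open>Measure-preserving maps and multiple ergodic averages\<close>

lemma avg_measurable [measurable]:
  assumes [measurable]: "\<And>n. F n \<in> borel_measurable M"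
  shows "avg N F \<in> borel_measurable M"
  unfolding avg_def by measurable

lemma avg_bounded:
  assumes "\<And>n. AE x in M. cmod (F n x) \<le> C" "0 \<le> C"
  shows "AE x in M. cmod (avg N F x) \<le> C"
proof -
  have "AE x in M. \<forall>n. cmod (F n x) \<le> C"
    using assms(1) by (simp add: AE_all_countable)
  then show ?thesis
  proof eventually_elim
    fix x
    assume bound: "\<forall>n. cmod (F n x) \<le> C"
    have "cmod (\<Sum>n=1..N. F n x) \<le> real N * C"
      using norm_sum[of "\<lambda>n. F n x" "{1..N}"] sum_mono[of "{1..N}" "\<lambda>n. cmod (F n x)" "\<lambda>_. C"] bound
      by simp
    then show "cmod (avg N F x) \<le> C"
      using assms(2) by (cases "N = 0") (simp_all add: avg_def norm_divide field_simps)
  qed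
qed

lemma integral_avg:
  assumes "\<And>n. integrable M (F n)"
  shows "(\<integral>x. avg N F x \<partial>M) = (\<Sum>n=1..N. \<integral>x. F n x \<partial>M) / of_nat N"
  unfolding avg_def using assms by simp

lemma mpt_comp:
  assumes "mpt M f" "mpt M g"
  shows "mpt M (f \<circ> g)"
  using assms distr_distr[of f M M g M] measurable_comp[of g M M f M] by (simp add: mpt_def)

lemma mpt_funpow:
  assumes "mpt M f"
  shows "mpt M (f ^^ n)"
proof (induction n)
  case 0
  then show ?case
    by (simp add: mpt_def id_def distr_id measurable_ident_sets)
next
  case (Suc n)
  then show ?case
    using mpt_comp[OF assms Suc] by (simp add: comp_def)
qed

lemma mpt_tpow:
  assumes "mpt M S" "mpt M (inv S)"
  shows "mpt M (tpow S k)"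
  unfolding tpow_def using mpt_funpow[OF assms(1)] mpt_funpow[OF assms(2)] by simp

lemma tpow_neg_cancel:
  assumes "bij S"
  shows "tpow S (- k) (tpow S k x) = x"
proof (cases "0 \<le> k")
  case True
  then show ?thesis
    using inv_fn_o_fn_is_id[OF assms, of "nat k"]
    by (cases "k = 0") (auto simp: tpow_def fun_eq_iff)
next
  case False
  then show ?thesis
    using fn_o_inv_fn_is_id[OF assms, of "nat (- k)"] by (auto simp: tpow_def fun_eq_iff)
qed

lemma mpt_measurable_comp:
  assumes "mpt M \<psi>" "\<phi> \<in> borel_measurable M"
  shows "(\<lambda>x. \<phi> (\<psi> x)) \<in> borel_measurable M"
  using assms measurable_comp[of \<psi> M M \<phi>] by (simp add: mpt_def comp_def)

lemma mpt_AE_comp: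
  assumes "mpt M \<psi>" "AE x in M. P x"
  shows "AE x in M. P (\<psi> x)"
proof (rule AE_distrD[of \<psi> M M])
  show "\<psi> \<in> measurable M M"
    using assms(1) by (simp add: mpt_def)
  have "distr M M \<psi> = M"
    using assms(1) by (simp add: mpt_def)
  then show "AE x in distr M M \<psi>. P x"
    using assms(2) by (metis (no_types))
qed

lemma mpt_integral_comp:
  fixes G :: "'a \<Rightarrow> 'b::{banach, second_countable_topology}"
  assumes "mpt M \<psi>" "G \<in> borel_measurable M"
  shows "(\<integral>x. G (\<psi> x) \<partial>M) = (\<integral>x. G x \<partial>M)"
  using assms integral_distr[of \<psi> M M G] by (simp add: mpt_def)

locale multiple_ergodic_average =
  fixes M :: "'a measure" and l m :: nat and T :: "nat \<Rightarrow> 'a \<Rightarrow> 'a"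
    and a :: "nat \<Rightarrow> nat \<Rightarrow> int" and f :: "nat \<Rightarrow> 'a \<Rightarrow> complex"
  assumes system: "mps_system M l T"
    and f_one_bounded: "\<forall>j\<in>{1..l}. one_bounded M (f j)"
    and m_index: "m \<in> {1..l}"
begin

sublocale prob_space M
  using system by (simp add: mps_system_def)

text \<open>\<open>replaced_avg N \<phi>\<close> is the average of the products with \<open>f m\<close> replaced by \<open>\<phi>\<close>;
  \<open>dual_avg N g\<close> is the average whose weak limit is \<open>f\<^sub>m\<close> with a tilde in the statement.\<close>

definition replaced_avg :: "nat \<Rightarrow> ('a \<Rightarrow> complex) \<Rightarrow> 'a \<Rightarrow> complex" where
  "replaced_avg N \<phi> =
     avg N (\<lambda>n x. \<phi> (tpow (T m) (a m n) x) * (\<Prod>j\<in>{1..l}-{m}. f j (tpow (T j) (a j n) x)))"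

definition dual_avg :: "nat \<Rightarrow> ('a \<Rightarrow> complex) \<Rightarrow> 'a \<Rightarrow> complex" where
  "dual_avg N g = avg N (\<lambda>n x. g (tpow (T m) (- a m n) x) *
     (\<Prod>j\<in>{1..l}-{m}. cnj (f j (tpow (T j) (a j n) (tpow (T m) (- a m n) x)))))"

lemma mpt_tpow_T: "j \<in> {1..l} \<Longrightarrow> mpt M (tpow (T j) k)"
  using system unfolding mps_system_def by (intro mpt_tpow) auto

lemma tpow_T_neg_cancel: "tpow (T m) (- k) (tpow (T m) k x) = x"
  using system m_index unfolding mps_system_def by (intro tpow_neg_cancel) auto

lemma bounded_comp_tpow_T:
  assumes "\<phi> \<in> borel_measurable M" "AE x in M. cmod (\<phi> x) \<le> C"
  shows "(\<lambda>x. \<phi> (tpow (T m) k x)) \<in> borel_measurable M" "AE x in M. cmod (\<phi> (tpow (T m) k x)) \<le> C"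
  using mpt_measurable_comp[OF mpt_tpow_T[OF m_index] assms(1)] mpt_AE_comp[OF mpt_tpow_T[OF m_index] assms(2)]
  by auto

lemma prod_f_bounded:
  assumes "J \<subseteq> {1..l}" "\<And>j. j \<in> J \<Longrightarrow> mpt M (\<psi> j)"
  shows "(\<lambda>x. \<Prod>j\<in>J. f j (\<psi> j x)) \<in> borel_measurable M" "AE x in M. cmod (\<Prod>j\<in>J. f j (\<psi> j x)) \<le> 1"
proof -
  have fJ: "finite J"
    using assms(1) finite_subset by blast
  have f: "f j \<in> borel_measurable M" "AE x in M. cmod (f j x) \<le> 1" if "j \<in> J" for j
    using f_one_bounded assms(1) that by (auto simp: one_bounded_def)
  show "(\<lambda>x. \<Prod>j\<in>J. f j (\<psi> j x)) \<in> borel_measurable M"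
    using f(1) assms(2) by (intro borel_measurable_prod) (rule mpt_measurable_comp)
  have "AE x in M. \<forall>j\<in>J. cmod (f j (\<psi> j x)) \<le> 1"
    using fJ f(2) assms(2) by (intro AE_finite_allI) (auto intro: mpt_AE_comp)
  then show "AE x in M. cmod (\<Prod>j\<in>J. f j (\<psi> j x)) \<le> 1"
    by eventually_elim (auto simp: prod_norm[symmetric] intro: prod_le_1)
qed


lemma prod_f_tpow_bounded:
  "(\<lambda>x. \<Prod>j\<in>{1..l}-{m}. f j (tpow (T j) (a j n) x)) \<in> borel_measurable M"
  "AE x in M. cmod (\<Prod>j\<in>{1..l}-{m}. f j (tpow (T j) (a j n) x)) \<le> 1"
  using prod_f_bounded[of "{1..l}-{m}" "\<lambda>j. tpow (T j) (a j n)"] mpt_tpow_T by auto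

lemma replaced_avg_bounded:
  assumes "\<phi> \<in> borel_measurable M" "AE x in M. cmod (\<phi> x) \<le> C"
  shows "replaced_avg N \<phi> \<in> borel_measurable M" "AE x in M. cmod (replaced_avg N \<phi> x) \<le> C"
proof -
  note \<phi>T = bounded_comp_tpow_T[OF assms]
  show "replaced_avg N \<phi> \<in> borel_measurable M"
    unfolding replaced_avg_def using \<phi>T(1) prod_f_tpow_bounded(1) by measurable
  have "AE x in M. 0 \<le> C"
    using assms(2) by eventually_elim (rule order_trans[OF norm_ge_zero])
  then have "0 \<le> C"
    by simp
  then show "AE x in M. cmod (replaced_avg N \<phi> x) \<le> C"
    unfolding replaced_avg_def
    using AE_norm_mult_le[OF \<phi>T(2) prod_f_tpow_bounded(2)] by (intro avg_bounded) auto
qed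

lemma dual_avg_term_eq:
  "g (tpow (T m) (- a m n) x) * (\<Prod>j\<in>{1..l}-{m}. cnj (f j (tpow (T j) (a j n) (tpow (T m) (- a m n) x))))
   = (\<lambda>y. g y * cnj (\<Prod>j\<in>{1..l}-{m}. f j (tpow (T j) (a j n) y))) (tpow (T m) (- a m n) x)"
  by (simp add: cnj_prod)

lemma dual_avg_bounded:
  assumes "g \<in> borel_measurable M" "AE x in M. cmod (g x) \<le> 1"
  shows "dual_avg N g \<in> borel_measurable M" "AE x in M. cmod (dual_avg N g x) \<le> 1"
proof -
  have G: "(\<lambda>y. g y * cnj (\<Prod>j\<in>{1..l}-{m}. f j (tpow (T j) (a j n) y))) \<in> borel_measurable M"
    "AE y in M. cmod (g y * cnj (\<Prod>j\<in>{1..l}-{m}. f j (tpow (T j) (a j n) y))) \<le> 1" for n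
  proof -
    show "(\<lambda>y. g y * cnj (\<Prod>j\<in>{1..l}-{m}. f j (tpow (T j) (a j n) y))) \<in> borel_measurable M"
      using assms(1) prod_f_tpow_bounded(1) by (intro borel_measurable_times borel_measurable_cnj)
    have "AE y in M. cmod (cnj (\<Prod>j\<in>{1..l}-{m}. f j (tpow (T j) (a j n) y))) \<le> 1"
      using prod_f_tpow_bounded(2) by (simp only: complex_mod_cnj)
    from AE_norm_mult_le[OF assms(2) this]
    show "AE y in M. cmod (g y * cnj (\<Prod>j\<in>{1..l}-{m}. f j (tpow (T j) (a j n) y))) \<le> 1"
      by simp
  qed
  show "dual_avg N g \<in> borel_measurable M"
    unfolding dual_avg_def dual_avg_term_eq using bounded_comp_tpow_T(1)[OF G] by measurable
  show "AE x in M. cmod (dual_avg N g x) \<le> 1"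
    unfolding dual_avg_def dual_avg_term_eq using bounded_comp_tpow_T(2)[OF G] by (intro avg_bounded) auto
qed


text \<open>The two averages are adjoint: each term is transformed by the substitution
  \<open>x = tpow (T m) (a m n) y\<close>.\<close>

lemma integral_dual_avg_mult_cnj:
  assumes g: "g \<in> borel_measurable M" "AE x in M. cmod (g x) \<le> 1"
    and \<phi>: "\<phi> \<in> borel_measurable M" "AE x in M. cmod (\<phi> x) \<le> C"
  shows "(\<integral>x. dual_avg N g x * cnj (\<phi> x) \<partial>M) = cnj (\<integral>x. replaced_avg N \<phi> x * cnj (g x) \<partial>M)"
proof -
  define Q where "Q n y = (\<Prod>j\<in>{1..l}-{m}. f j (tpow (T j) (a j n) y))" for n y
  define L where "L n x = g (tpow (T m) (- a m n) x) * cnj (Q n (tpow (T m) (- a m n) x)) * cnj (\<phi> x)" for n x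
  define R where "R n y = \<phi> (tpow (T m) (a m n) y) * Q n y * cnj (g y)" for n y
  have Q: "Q n \<in> borel_measurable M" "AE x in M. cmod (Q n x) \<le> 1" for n
    unfolding Q_def by (rule prod_f_tpow_bounded)+
  have L: "L n \<in> borel_measurable M" "AE x in M. cmod (L n x) \<le> 1 * 1 * C" for n
  proof -
    have gQ_meas: "(\<lambda>x. g x * cnj (Q n x)) \<in> borel_measurable M"
      using g(1) Q(1) by (intro borel_measurable_times borel_measurable_cnj)
    have cnj_Q: "AE x in M. cmod (cnj (Q n x)) \<le> 1"
      using Q(2) by simp
    note gQ = bounded_comp_tpow_T[OF gQ_meas AE_norm_mult_le[OF g(2) cnj_Q], of "- a m n"]
    show "L n \<in> borel_measurable M"
      unfolding L_def using borel_measurable_times[OF gQ(1) borel_measurable_cnj[OF \<phi>(1)]] by simp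
    have "AE x in M. cmod (cnj (\<phi> x)) \<le> C"
      using \<phi>(2) by simp
    with gQ(2) show "AE x in M. cmod (L n x) \<le> 1 * 1 * C"
      unfolding L_def by (rule AE_norm_mult_le)
  qed
  have R: "R n \<in> borel_measurable M" "AE x in M. cmod (R n x) \<le> C * 1 * 1" for n
  proof -
    note \<phi>T = bounded_comp_tpow_T[OF \<phi>, of "a m n"]
    show "R n \<in> borel_measurable M"
      unfolding R_def using \<phi>T(1) g(1) Q(1) by measurable
    have "AE x in M. cmod (cnj (g x)) \<le> 1"
      using g(2) by simp
    then show "AE x in M. cmod (R n x) \<le> C * 1 * 1"
      unfolding R_def by (intro AE_norm_mult_le \<phi>T(2) Q(2))
  qed
  have integrable: "integrable M (L n)" "integrable M (R n)" for n
    using integrable_const_bound[OF L(2) L(1)] integrable_const_bound[OF R(2) R(1)] by simp_all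
  have "(\<integral>x. L n x \<partial>M) = cnj (\<integral>y. R n y \<partial>M)" for n
  proof -
    have "(\<integral>x. L n x \<partial>M) = (\<integral>y. L n (tpow (T m) (a m n) y) \<partial>M)"
      using mpt_integral_comp[OF mpt_tpow_T[OF m_index] L(1)] by simp
    also have "\<dots> = (\<integral>y. cnj (R n y) \<partial>M)"
      unfolding L_def R_def tpow_T_neg_cancel by (simp add: mult_ac)
    finally show ?thesis
      by simp
  qed
  moreover have "dual_avg N g x * cnj (\<phi> x) = avg N L x" "replaced_avg N \<phi> x * cnj (g x) = avg N R x" for x
    unfolding dual_avg_def replaced_avg_def avg_def L_def R_def Q_def
    by (simp_all add: sum_distrib_right cnj_prod)
  ultimately show ?thesis
    using integrable by (simp add: integral_avg cnj_sum)
qed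


lemma f_m_bounded: "f m \<in> borel_measurable M" "AE x in M. cmod (f m x) \<le> 1"
  using f_one_bounded m_index by (auto simp: one_bounded_def)

lemma replaced_avg_f_m: "replaced_avg N (f m) = avg N (\<lambda>n x. \<Prod>j\<in>{1..l}. f j (tpow (T j) (a j n) x))"
  unfolding replaced_avg_def by (simp only: prod.remove[OF finite_atLeastAtMost m_index])

lemma integral_dual_avg_replaced_avg_f_m:
  "(\<integral>x. dual_avg N (replaced_avg N (f m)) x * cnj (f m x) \<partial>M) = of_real ((L2norm M (replaced_avg N (f m)))\<^sup>2)"
  using replaced_avg_bounded[OF f_m_bounded]
  by (simp add: integral_dual_avg_mult_cnj[OF _ _ f_m_bounded] integral_mult_cnj_self)

lemma Re_integral_dual_avg_le_L2norm:
  assumes g: "g \<in> borel_measurable M" "AE x in M. cmod (g x) \<le> 1"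
    and \<phi>: "\<phi> \<in> borel_measurable M" "AE x in M. cmod (\<phi> x) \<le> C"
  shows "Re (\<integral>x. dual_avg N g x * cnj (\<phi> x) \<partial>M) \<le> L2norm M (replaced_avg N \<phi>)"
proof -
  have "Re (\<integral>x. dual_avg N g x * cnj (\<phi> x) \<partial>M) \<le> cmod (\<integral>x. replaced_avg N \<phi> x * cnj (g x) \<partial>M)"
    unfolding integral_dual_avg_mult_cnj[OF g \<phi>] using complex_Re_le_cmod by simp
  also have "\<dots> \<le> L2norm M (replaced_avg N \<phi>)"
    using replaced_avg_bounded[OF \<phi>] g by (rule cmod_integral_mult_cnj_le_L2norm)
  finally show ?thesis .
qed

lemma limsup_L2norm_replaced_avg_ge:
  assumes g: "\<And>k. g k \<in> borel_measurable M" "\<And>k. AE x in M. cmod (g k x) \<le> 1"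
    and \<phi>: "\<phi> \<in> borel_measurable M" "AE x in M. cmod (\<phi> x) \<le> C"
    and lim: "(\<lambda>k. \<integral>x. dual_avg (N k) (g k) x * cnj (\<phi> x) \<partial>M) \<longlonglongrightarrow> c"
  shows "ereal (Re c) \<le> limsup (\<lambda>k. ereal (L2norm M (replaced_avg (N k) \<phi>)))"
proof -
  have "(\<lambda>k. ereal (Re (\<integral>x. dual_avg (N k) (g k) x * cnj (\<phi> x) \<partial>M))) \<longlonglongrightarrow> ereal (Re c)"
    using tendsto_Re[OF lim] by simp
  then have "ereal (Re c) = limsup (\<lambda>k. ereal (Re (\<integral>x. dual_avg (N k) (g k) x * cnj (\<phi> x) \<partial>M)))"
    by (intro lim_imp_Limsup[OF trivial_limit_sequentially, symmetric])
  also have "\<dots> \<le> limsup (\<lambda>k. ereal (L2norm M (replaced_avg (N k) \<phi>)))"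
    using Re_integral_dual_avg_le_L2norm[OF g \<phi>] by (intro Limsup_mono) simp
  finally show ?thesis .
qed


lemma weak_limit_dual_avg_correlates_f_m:
  assumes \<delta>: "0 \<le> \<delta>" "ereal \<delta> \<le> limsup (\<lambda>N. ereal (L2norm M (replaced_avg N (f m))))"
  obtains Nk ft where "strict_mono Nk" "ft \<in> borel_measurable M" "\<And>x. cmod (ft x) \<le> 2"
    "\<And>h. integrable M h \<Longrightarrow>
      (\<lambda>k. \<integral>x. dual_avg (Nk k) (replaced_avg (Nk k) (f m)) x * cnj (h x) \<partial>M) \<longlonglongrightarrow> (\<integral>x. ft x * cnj (h x) \<partial>M)"
    "\<delta>\<^sup>2 \<le> Re (\<integral>x. ft x * cnj (f m x) \<partial>M)"
proof -
  note g = replaced_avg_bounded[OF f_m_bounded]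
  have "\<bar>L2norm M (replaced_avg N (f m))\<bar> \<le> 1" for N
    using L2norm_le_bound[OF g] by (simp add: L2norm_def)
  then obtain s L where s: "strict_mono s" "(\<lambda>k. L2norm M (replaced_avg (s k) (f m))) \<longlonglongrightarrow> L"
    and L: "limsup (\<lambda>N. ereal (L2norm M (replaced_avg N (f m)))) = ereal L"
    by (rule limsup_attained_subseq)
  obtain r ft where r: "strict_mono r" and ft: "ft \<in> borel_measurable M" "\<And>x. cmod (ft x) \<le> 2"
    and conv: "\<And>h. integrable M h \<Longrightarrow>
      (\<lambda>k. \<integral>x. dual_avg (s (r k)) (replaced_avg (s (r k)) (f m)) x * cnj (h x) \<partial>M) \<longlonglongrightarrow> (\<integral>x. ft x * cnj (h x) \<partial>M)"
    using weak_subseq_bounded_complex[of M "\<lambda>k. dual_avg (s k) (replaced_avg (s k) (f m))"]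
      dual_avg_bounded[OF g] finite_measure_axioms by blast
  have "(\<lambda>k. \<integral>x. dual_avg (s (r k)) (replaced_avg (s (r k)) (f m)) x * cnj (f m x) \<partial>M) \<longlonglongrightarrow> of_real (L\<^sup>2)"
    unfolding integral_dual_avg_replaced_avg_f_m
    using LIMSEQ_subseq_LIMSEQ[OF s(2) r] by (auto simp: comp_def intro!: tendsto_intros)
  moreover have "integrable M (f m)"
    using f_m_bounded by (intro integrable_const_bound) auto
  ultimately have "(\<integral>x. ft x * cnj (f m x) \<partial>M) = of_real (L\<^sup>2)"
    using conv LIMSEQ_unique by blast
  moreover have "\<delta>\<^sup>2 \<le> L\<^sup>2"
    using \<delta> L by (intro power_mono) auto
  ultimately show thesis
    using that[OF strict_mono_o[OF s(1) r] ft] conv by (simp add: comp_def)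
qed

end

theorem mainTheorem6:
  fixes M A :: "'a measure" and l m :: nat and T :: "nat \<Rightarrow> 'a \<Rightarrow> 'a"
    and a :: "nat \<Rightarrow> nat \<Rightarrow> int" and f :: "nat \<Rightarrow> 'a \<Rightarrow> complex" and \<delta> :: real
  assumes sys: "mps_system M l T"
    and delta: "\<delta> > 0"
    and fbd: "\<forall>j\<in>{1..l}. one_bounded M (f j)"
    and hyp: "limsup (\<lambda>N. ereal (L2norm M
               (avg N (\<lambda>n x. \<Prod>j\<in>{1..l}. f j (tpow (T j) (a j n) x))))) \<ge> ereal \<delta>"
    and m: "m \<in> {1..l}"
    and sub: "subalgebra M A"
    and fm: "f m \<in> borel_measurable A"
  shows "\<exists>Nk :: nat \<Rightarrow> nat. \<exists>g :: nat \<Rightarrow> 'a \<Rightarrow> complex. \<exists>ft :: 'a \<Rightarrow> complex.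
           filterlim Nk at_top sequentially \<and>
           (\<forall>k. one_bounded M (g k)) \<and>
           weak_L2_limit M
             (\<lambda>k. avg (Nk k) (\<lambda>n x. g k (tpow (T m) (- a m n) x) *
                    (\<Prod>j\<in>{1..l}-{m}. cnj (f j (tpow (T j) (a j n) (tpow (T m) (- a m n) x))))))
             ft \<and>
           limsup (\<lambda>k. ereal (L2norm M
               (avg (Nk k) (\<lambda>n x. cond_exp_c M A ft (tpow (T m) (a m n) x) *
                    (\<Prod>j\<in>{1..l}-{m}. f j (tpow (T j) (a j n) x)))))) \<ge> ereal (\<delta> ^ 4)"
proof -
  interpret multiple_ergodic_average M l m T a f
    using sys fbd m by unfold_locales
  have "ereal \<delta> \<le> limsup (\<lambda>N. ereal (L2norm M (replaced_avg N (f m))))"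
    using hyp unfolding replaced_avg_f_m .
  then obtain Nk ft where Nk: "strict_mono Nk" and ft_meas: "ft \<in> borel_measurable M"
    and ft_le: "\<And>x. cmod (ft x) \<le> 2"
    and conv: "\<And>h. integrable M h \<Longrightarrow>
      (\<lambda>k. \<integral>x. dual_avg (Nk k) (replaced_avg (Nk k) (f m)) x * cnj (h x) \<partial>M) \<longlonglongrightarrow> (\<integral>x. ft x * cnj (h x) \<partial>M)"
    and corr: "\<delta>\<^sup>2 \<le> Re (\<integral>x. ft x * cnj (f m x) \<partial>M)"
    using weak_limit_dual_avg_correlates_f_m[OF less_imp_le[OF delta]] by blast
  have ft: "ft \<in> borel_measurable M" "AE x in M. cmod (ft x) \<le> 2"
    using ft_meas ft_le by simp_all
  define h where "h = cond_exp_c M A ft"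
  have h: "h \<in> borel_measurable M" "AE x in M. cmod (h x) \<le> 2 * 2"
  proof -
    interpret finite_measure_subalgebra M A
      by unfold_locales (rule sub)
    show "h \<in> borel_measurable M" "AE x in M. cmod (h x) \<le> 2 * 2"
      unfolding h_def using measurable_from_subalg[OF sub cond_exp_c_measurable] cond_exp_c_bounded[OF ft]
      by auto
  qed
  have "\<delta>\<^sup>2 \<le> L2norm M h"
    using corr Re_integral_mult_cnj_le_L2norm_cond_exp_c[OF prob_space_axioms sub ft fm f_m_bounded(2)]
    unfolding h_def by linarith
  then have "\<delta> ^ 4 \<le> Re (of_real ((L2norm M h)\<^sup>2))"
    using power_mono[of "\<delta>\<^sup>2" "L2norm M h" 2] delta by (simp flip: power_mult)
  also have "\<dots> = Re (\<integral>x. ft x * cnj (h x) \<partial>M)"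
    unfolding h_def integral_mult_cnj_cond_exp_c[OF prob_space_axioms sub ft] ..
  finally have limsup: "ereal (\<delta> ^ 4) \<le> limsup (\<lambda>k. ereal (L2norm M (replaced_avg (Nk k) h)))"
    using limsup_L2norm_replaced_avg_ge[OF replaced_avg_bounded[OF f_m_bounded] h conv]
      integrable_const_bound[OF h(2) h(1)] by (meson ereal_less_eq(3) order_trans)
  show ?thesis
  proof (intro exI conjI allI)
    show "filterlim Nk at_top sequentially"
      by (rule filterlim_subseq[OF Nk])
    show "one_bounded M (replaced_avg (Nk k) (f m))" for k
      using replaced_avg_bounded[OF f_m_bounded] by (simp add: one_bounded_def)
    show "weak_L2_limit M (\<lambda>k. avg (Nk k) (\<lambda>n x. replaced_avg (Nk k) (f m) (tpow (T m) (- a m n) x) *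
        (\<Prod>j\<in>{1..l}-{m}. cnj (f j (tpow (T j) (a j n) (tpow (T m) (- a m n) x)))))) ft"
      using weak_L2_limit_if_bounded[OF ft conv] by (simp add: dual_avg_def)
    show "ereal (\<delta> ^ 4) \<le> limsup (\<lambda>k. ereal (L2norm M (avg (Nk k) (\<lambda>n x. cond_exp_c M A ft (tpow (T m) (a m n) x) *
        (\<Prod>j\<in>{1..l}-{m}. f j (tpow (T j) (a j n) x))))))"
      using limsup by (simp add: replaced_avg_def h_def)
  qed
qed

end
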